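(* Let $k$ be a field of characteristic zero, fix an integer $c\geq 3$, let $a,b,\alpha,\beta$ be positive integers with $\alpha<a$, $\beta<b$, and let $A=k[x,y,z]/(x^a, y^b, z^c, x^\alpha y^\beta)$. If $B=k[x,y]/(x^a, y^b, x^\alpha y^\beta)$ is not almost centered, then $A$ fails the strong Lefschetz property.
   Context: A standard graded Artinian $k$-algebra $A$ has the strong Lefschetz property if there is $\ell\in A_1$ such that for all $t\geq1$ and all $i$ the map $\cdot\ell^t:A_i\to A_{i+t}$ is injective or surjective. With $h_i=\dim_k B_i$ and socle degree $D$ (largest $i$ with $h_i\ne0$), $B$ is almost centered if either $h_{i-1} \leq h_{D-i} \leq h_i$ for all $0 \leq i \leq \lfloor D/2 \rfloor$, or $h_{D-i+1} \leq h_{i} \leq h_{D-i}$ for all $0 \leq i \leq \lfloor D/2 \rfloor$ (with $h_j=0$ for $j<0$ or $j>D$). *)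

theory Defs
  imports Main
begin

(* Monomial quotient algebras modelled by their standard-monomial basis.
   A monomial x^i y^j z^l is the triple (i,j,l).  For a monomial ideal I,
   the quotient k[x,y,z]/I has k-basis the monomials not in I (the set S);
   an element of the quotient is a function S -> k (zero outside S), and the
   product of two standard monomials is the monomial itself if it lies in S,
   and 0 otherwise. *)

type_synonym mon3 = "nat \<times> nat \<times> nat"

definition mdeg :: "mon3 \<Rightarrow> nat" where
  "mdeg m = (case m of (i,j,l) \<Rightarrow> i + j + l)"

definition stdA :: "nat \<Rightarrow> nat \<Rightarrow> nat \<Rightarrow> nat \<Rightarrow> nat \<Rightarrow> mon3 set" where
  "stdA a b c al be = {(i,j,l). i < a \<and> j < b \<and> l < c \<and> \<not> (al \<le> i \<and> be \<le> j)}"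

definition qmult :: "mon3 set \<Rightarrow> (mon3 \<Rightarrow> 'k::field) \<Rightarrow> (mon3 \<Rightarrow> 'k) \<Rightarrow> mon3 \<Rightarrow> 'k" where
  "qmult S f g m = (case m of (i,j,l) \<Rightarrow>
     (if m \<in> S then
        (\<Sum>(i',j',l') \<in> {0..i} \<times> {0..j} \<times> {0..l}. f (i',j',l') * g (i - i', j - j', l - l'))
      else 0))"

definition qone :: "mon3 set \<Rightarrow> mon3 \<Rightarrow> 'k::field" where
  "qone S m = (if m = (0,0,0) \<and> m \<in> S then 1 else 0)"

definition qpow :: "mon3 set \<Rightarrow> (mon3 \<Rightarrow> 'k::field) \<Rightarrow> nat \<Rightarrow> mon3 \<Rightarrow> 'k" where
  "qpow S f t = ((qmult S f) ^^ t) (qone S)"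

definition graded :: "mon3 set \<Rightarrow> nat \<Rightarrow> (mon3 \<Rightarrow> 'k::field) set" where
  "graded S d = {f. \<forall>m. f m \<noteq> 0 \<longrightarrow> m \<in> S \<and> mdeg m = d}"

definition SLP :: "'k::field itself \<Rightarrow> mon3 set \<Rightarrow> bool" where
  "SLP _ S = (\<exists>L \<in> (graded S 1 :: (mon3 \<Rightarrow> 'k) set). \<forall>t\<ge>1. \<forall>i.
      inj_on (\<lambda>f. qmult S (qpow S L t) f) (graded S i)
    \<or> (\<lambda>f. qmult S (qpow S L t) f) ` (graded S i) = graded S (i + t))"

definition hilbB :: "nat \<Rightarrow> nat \<Rightarrow> nat \<Rightarrow> nat \<Rightarrow> int \<Rightarrow> nat" where
  "hilbB a b al be d = (if d < 0 then 0 else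
     card {(i,j). i < a \<and> j < b \<and> \<not> (al \<le> i \<and> be \<le> j) \<and> int (i + j) = d})"

definition socdeg :: "(int \<Rightarrow> nat) \<Rightarrow> int" where
  "socdeg h = (GREATEST d. h d \<noteq> 0)"

definition almost_centered :: "(int \<Rightarrow> nat) \<Rightarrow> bool" where
  "almost_centered h = (let D = socdeg h in
     (\<forall>i. 0 \<le> i \<and> i \<le> D div 2 \<longrightarrow> h (i - 1) \<le> h (D - i) \<and> h (D - i) \<le> h i)
   \<or> (\<forall>i. 0 \<le> i \<and> i \<le> D div 2 \<longrightarrow> h (D - i + 1) \<le> h i \<and> h i \<le> h (D - i)))"

end

(*
  Write A = B[z]/(z^c), so that dim A_d = sum_{r<c} dim B_(d-r), and a linear form of A as
  L = l + lambda z with l in B_1. Fix t >= c, put s = t + 1 - c and expand L^t binomially.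
  If multiplication by l^s : B_i -> B_(i+s) has a kernel, then so has L^t : A_i -> A_(i+t):
  every term z^k l^(t-k) kills it, as z^k = 0 for k >= c and l^s divides l^(t-k) for k < c.
  Dually, the z^(c-1)-coefficient of L^t g lies in l^s B_i for all g in A_i, so L^t is not onto
  when dim B_i < dim B_(i+s). Comparing dim A_i with dim A_(i+t) then rules out the other half
  of the Lefschetz condition as well.
  Suitable degrees i < e = i + s come from the failure of almost centeredness: the Hilbert
  function h of B is a sum of two antidiagonal counts of rectangles with socle degree D, and at
  the first degree i where h fails to dominate (or to be dominated by) its mirror image
  h (D + 1 - i) (resp. h (D - 1 - i)), the defect is compensated by the two preceding degrees;
  as c >= 3, the window sums computing dim A_i and dim A_(i+t) compare the other way.
*)

theory Submission
  imports Defs "HOL-Computational_Algebra.Polynomial" "HOL-Library.Function_Algebras"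
begin

section \<open>Function spaces and dimension counting\<close>

definition fscale :: "'k::field \<Rightarrow> ('a \<Rightarrow> 'k) \<Rightarrow> 'a \<Rightarrow> 'k" where
  "fscale c f = (\<lambda>m. c * f m)"

interpretation fun_space: vector_space "fscale :: 'k::field \<Rightarrow> ('a \<Rightarrow> 'k) \<Rightarrow> 'a \<Rightarrow> 'k"
  by unfold_locales (auto simp: fscale_def fun_eq_iff algebra_simps)

interpretation fun_spaces: vector_space_pair
  "fscale :: 'k::field \<Rightarrow> ('a \<Rightarrow> 'k) \<Rightarrow> 'a \<Rightarrow> 'k" "fscale :: 'k \<Rightarrow> ('b \<Rightarrow> 'k) \<Rightarrow> 'b \<Rightarrow> 'k"
  by unfold_locales

lemma linear_fscale_iff:
  "Vector_Spaces.linear fscale fscale (f :: ('a \<Rightarrow> 'k::field) \<Rightarrow> 'b \<Rightarrow> 'k) \<longleftrightarrow>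
     (\<forall>x y. f (x + y) = f x + f y) \<and> (\<forall>c x. f (fscale c x) = fscale c (f x))"
  by (simp add: Vector_Spaces.linear_iff fun_space.vector_space_axioms)

definition delta :: "'a \<Rightarrow> 'a \<Rightarrow> 'k::zero_neq_one" where
  "delta m = (\<lambda>m'. if m' = m then 1 else 0)"

lemma sum_fun_apply: "(\<Sum>a\<in>A. F a) x = (\<Sum>a\<in>A. F a x)"
  by (induction A rule: infinite_finite_induct) auto

definition supported_on :: "'a set \<Rightarrow> ('a \<Rightarrow> 'k::field) set" where
  "supported_on M = {f. \<forall>m. f m \<noteq> 0 \<longrightarrow> m \<in> M}"

lemma supported_on_mono: "M \<subseteq> N \<Longrightarrow> supported_on M \<subseteq> supported_on N"
  by (auto simp: supported_on_def)

lemma delta_expansion: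
  assumes "finite M" "f \<in> supported_on M"
  shows "f = (\<Sum>m\<in>M. fscale (f m) (delta m))"
proof
  fix x
  have "(\<Sum>m\<in>M. fscale (f m) (delta m)) x = (if x \<in> M then f x else 0)"
    using assms(1) by (simp add: fscale_def sum_fun_apply delta_def if_distrib cong: if_cong)
  then show "f x = (\<Sum>m\<in>M. fscale (f m) (delta m)) x"
    using assms(2) by (auto simp: supported_on_def)
qed

lemma span_delta_subset: "fun_space.span (delta ` M) \<subseteq> supported_on M"
proof (rule fun_space.span_minimal)
  show "fun_space.subspace (supported_on M)"
    unfolding fun_space.subspace_def supported_on_def by (auto simp: fscale_def) (metis add.right_neutral)
qed (auto simp: supported_on_def delta_def split: if_splits)

lemma span_delta:
  assumes "finite M"
  shows "fun_space.span (delta ` M) = supported_on M"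
proof
  show "supported_on M \<subseteq> fun_space.span (delta ` M)"
  proof
    fix f assume "f \<in> supported_on M"
    moreover have "(\<Sum>m\<in>M. fscale (f m) (delta m)) \<in> fun_space.span (delta ` M)"
      by (intro fun_space.span_sum fun_space.span_scale fun_space.span_base) simp
    ultimately show "f \<in> fun_space.span (delta ` M)"
      using delta_expansion[OF assms] by metis
  qed
qed (rule span_delta_subset)

lemma inj_delta: "inj (delta :: 'a \<Rightarrow> 'a \<Rightarrow> 'k::zero_neq_one)"
  by (rule injI) (metis delta_def zero_neq_one)

lemma card_delta_image: "card (delta ` M :: ('a \<Rightarrow> 'k::field) set) = card M"
  by (rule card_image) (meson inj_delta inj_on_subset subset_UNIV)

lemma independent_delta_image: "fun_space.independent (delta ` M :: ('a \<Rightarrow> 'k::field) set)"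
proof
  assume "fun_space.dependent (delta ` M :: ('a \<Rightarrow> 'k) set)"
  then obtain m where "m \<in> M" "(delta m :: 'a \<Rightarrow> 'k) \<in> fun_space.span (delta ` M - {delta m})"
    unfolding fun_space.dependent_def by auto
  moreover have "delta ` M - {delta m} = (delta ` (M - {m}) :: ('a \<Rightarrow> 'k) set)"
    using image_set_diff[OF inj_delta[where 'k='k], of M "{m}"] by simp
  ultimately have "(delta m :: 'a \<Rightarrow> 'k) \<in> supported_on (M - {m})"
    using span_delta_subset by auto
  then have "(delta m :: 'a \<Rightarrow> 'k) m = 0"
    unfolding supported_on_def by blast
  then show False by (simp add: delta_def)
qed

context vector_space_pair
begin

lemma card_le_if_linear_inj_on_span:
  assumes lin: "Vector_Spaces.linear s1 s2 f" and Y: "finite Y" and X: "vs1.independent X"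
    and img: "f ` vs1.span X \<subseteq> vs2.span Y" and inj: "inj_on f (vs1.span X)"
  shows "card X \<le> card Y"
proof -
  have "inj_on f X" using inj vs1.span_superset by (rule inj_on_subset)
  moreover have "vs2.independent (f ` X)"
    using linear_independent_injective_image[OF lin X inj] .
  moreover have "f ` X \<subseteq> vs2.span Y" using img vs1.span_superset by blast
  ultimately show ?thesis
    using vs2.independent_span_bound[OF Y] by (metis card_image)
qed

lemma linear_inj_on_span_imp_onto:
  assumes lin: "Vector_Spaces.linear s1 s2 f" and Y: "finite Y" and X: "vs1.independent X"
    and img: "f ` vs1.span X \<subseteq> vs2.span Y" and card: "card Y \<le> card X"
    and inj: "inj_on f (vs1.span X)"
  shows "f ` vs1.span X = vs2.span Y"
proof
  show "f ` vs1.span X \<subseteq> vs2.span Y" by (rule img)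
  define B where "B = f ` X"
  have indB: "vs2.independent B"
    unfolding B_def using linear_independent_injective_image[OF lin X inj] .
  have BY: "B \<subseteq> vs2.span Y" unfolding B_def using img vs1.span_superset by blast
  have finB: "finite B" using vs2.independent_span_bound[OF Y indB BY] by blast
  have cardB: "card B = card X"
    unfolding B_def using inj vs1.span_superset by (metis card_image inj_on_subset)
  have "vs2.span Y \<subseteq> vs2.span B"
  proof
    fix v assume v: "v \<in> vs2.span Y"
    show "v \<in> vs2.span B"
    proof (rule ccontr)
      assume nv: "v \<notin> vs2.span B"
      then have "card (insert v B) \<le> card Y"
        using vs2.independent_span_bound[OF Y vs2.independent_insertI[OF nv indB]] v BY by blast
      moreover have "v \<notin> B" using nv vs2.span_base by blast
      ultimately show False using finB cardB card by simp
    qed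
  qed
  then show "vs2.span Y \<subseteq> f ` vs1.span X"
    unfolding B_def linear_span_image[OF lin] .
qed

lemma linear_onto_span_imp_inj_on:
  assumes lin: "Vector_Spaces.linear s1 s2 f" and X: "finite X" "vs1.independent X" and Y: "vs2.independent Y"
    and onto: "f ` vs1.span X = vs2.span Y" and card: "card X \<le> card Y"
  shows "inj_on f (vs1.span X)"
proof -
  obtain B where B: "B \<subseteq> f ` X" "vs2.independent B" "f ` X \<subseteq> vs2.span B"
    using vs2.maximal_independent_subset by blast
  have finB: "finite B" using B(1) X(1) finite_surj by blast
  have "Y \<subseteq> vs2.span B"
    using onto vs2.span_superset vs2.span_minimal[OF B(3) vs2.subspace_span]
    unfolding linear_span_image[OF lin] by blast
  then have "card Y \<le> card B" using vs2.independent_span_bound[OF finB Y] by blast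
  moreover have "card B \<le> card (f ` X)" using B(1) X(1) by (simp add: card_mono)
  moreover have "card (f ` X) \<le> card X" using X(1) by (rule card_image_le)
  ultimately have "B = f ` X" and "card (f ` X) = card X"
    using card B(1) X(1) card_subset_eq[OF finite_imageI B(1)] by auto
  then show ?thesis
    using linear_inj_on_span_iff_independent_image[OF lin] B(2) eq_card_imp_inj_on[OF X(1)] by simp
qed

end

section \<open>Polynomials in three variables and monomial quotients\<close>

text \<open>A polynomial in \<open>k[x,y,z]\<close> is a \<open>'k poly poly poly\<close> with \<open>z\<close> outermost and \<open>x\<close> innermost.\<close>

definition coeff3 :: "'k::comm_ring_1 poly poly poly \<Rightarrow> mon3 \<Rightarrow> 'k" where
  "coeff3 P m = (case m of (i,j,l) \<Rightarrow> coeff (coeff (coeff P l) j) i)"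

lemma coeff3_mult:
  "coeff3 (P * Q) (i,j,l) =
     (\<Sum>(i',j',l') \<in> {0..i} \<times> {0..j} \<times> {0..l}. coeff3 P (i',j',l') * coeff3 Q (i - i', j - j', l - l'))"
proof -
  let ?F = "\<lambda>l' j' i'. coeff (coeff (coeff P l') j') i' * coeff (coeff (coeff Q (l - l')) (j - j')) (i - i')"
  have "coeff3 (P * Q) (i,j,l) = (\<Sum>l'\<le>l. \<Sum>j'\<le>j. \<Sum>i'\<le>i. ?F l' j' i')"
    by (simp add: coeff3_def coeff_mult coeff_sum)
  also have "\<dots> = (\<Sum>l'\<le>l. \<Sum>i'\<le>i. \<Sum>j'\<le>j. ?F l' j' i')"
    by (rule sum.cong[OF refl], rule sum.swap)
  also have "\<dots> = (\<Sum>i'\<le>i. \<Sum>l'\<le>l. \<Sum>j'\<le>j. ?F l' j' i')"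
    by (rule sum.swap)
  also have "\<dots> = (\<Sum>i'\<le>i. \<Sum>j'\<le>j. \<Sum>l'\<le>l. ?F l' j' i')"
    by (rule sum.cong[OF refl], rule sum.swap)
  also have "\<dots> = (\<Sum>(i',j',l') \<in> {0..i} \<times> {0..j} \<times> {0..l}.
      coeff3 P (i',j',l') * coeff3 Q (i - i', j - j', l - l'))"
    by (simp add: sum.cartesian_product[symmetric] atLeast0AtMost coeff3_def)
  finally show ?thesis .
qed

lemma coeff3_add: "coeff3 (P + Q) m = coeff3 P m + coeff3 Q m"
  by (cases m) (simp add: coeff3_def)

lemma coeff3_0: "coeff3 0 m = 0"
  by (cases m) (simp add: coeff3_def)

lemma coeff3_1: "coeff3 1 m = (if m = (0,0,0) then 1 else 0)"
  by (cases m) (auto simp: coeff3_def coeff_1)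

lemma coeff3_sum: "coeff3 (\<Sum>x\<in>A. F x) m = (\<Sum>x\<in>A. coeff3 (F x) m)"
  by (induction A rule: infinite_finite_induct) (auto simp: coeff3_add coeff3_0)

lemma coeff3_mult_nonzero:
  assumes "coeff3 (P * Q) (i,j,l) \<noteq> 0"
  obtains i' j' l' where "i' \<le> i" "j' \<le> j" "l' \<le> l"
    "coeff3 P (i',j',l') \<noteq> 0" "coeff3 Q (i - i', j - j', l - l') \<noteq> 0"
proof -
  obtain x where "x \<in> {0..i} \<times> {0..j} \<times> {0..l}"
    "(case x of (i',j',l') \<Rightarrow> coeff3 P (i',j',l') * coeff3 Q (i - i', j - j', l - l')) \<noteq> 0"
    using assms unfolding coeff3_mult by (blast dest: sum.not_neutral_contains_not_neutral)
  then show ?thesis using that by (cases x) (auto dest!: mult_not_zero)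
qed

definition const3 :: "'k::comm_ring_1 \<Rightarrow> 'k poly poly poly" where
  "const3 c = [:[:[:c:]:]:]"

lemma coeff3_const3_mult: "coeff3 (const3 c * P) m = c * coeff3 P m"
  by (cases m) (simp add: coeff3_def const3_def)

lemma const3_mult: "const3 a * const3 b = const3 (a * b)"
  by (simp add: const3_def)

lemma const3_power: "const3 a ^ n = const3 (a ^ n)"
  by (induction n) (auto simp: const3_def one_pCons)

lemma of_nat_eq_const3: "(of_nat n :: 'k::comm_ring_1 poly poly poly) = const3 (of_nat n)"
  by (simp add: const3_def of_nat_poly)

definition monom3 :: "mon3 \<Rightarrow> 'k::comm_ring_1 poly poly poly" where
  "monom3 m = (case m of (i,j,l) \<Rightarrow> monom (monom (monom 1 i) j) l)"

lemma coeff3_monom3: "coeff3 (monom3 m) = delta m"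
  by (cases m) (auto simp: coeff3_def monom3_def delta_def coeff_monom fun_eq_iff)

lemma monom3_mult: "monom3 (i,j,l) * monom3 (i',j',l') = monom3 (i + i', j + j', l + l')"
  by (simp add: monom3_def mult_monom)

lemma monom3_0: "monom3 (0,0,0) = 1"
  by (simp add: monom3_def one_pCons monom_0)

lemma monom3_z_power: "(monom3 (0,0,1) :: 'k::comm_ring_1 poly poly poly) ^ k = monom3 (0,0,k)"
  by (induction k) (simp_all add: monom3_0 monom3_mult[of 0 0 1 0 0, simplified])

lemma coeff3_monom3_z_mult:
  "coeff3 (monom3 (0,0,w) * P) (i,j,l) = (if w \<le> l then coeff3 P (i,j,l - w) else 0)"
  by (simp add: monom3_def monom_0 one_pCons coeff3_def coeff_monom_mult)

definition down_closed :: "mon3 set \<Rightarrow> bool" where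
  "down_closed S \<longleftrightarrow>
     (\<forall>i j l i' j' l'. (i,j,l) \<in> S \<longrightarrow> i' \<le> i \<longrightarrow> j' \<le> j \<longrightarrow> l' \<le> l \<longrightarrow> (i',j',l') \<in> S)"

text \<open>For down-closed \<open>S\<close> the monomials outside \<open>S\<close> span an ideal, so discarding their
  coefficients is the ring homomorphism onto the quotient with standard monomials \<open>S\<close>.\<close>

definition qclass :: "mon3 set \<Rightarrow> 'k::field poly poly poly \<Rightarrow> mon3 \<Rightarrow> 'k" where
  "qclass S P = (\<lambda>m. if m \<in> S then coeff3 P m else 0)"

lemma qmult_qclass:
  assumes "down_closed S"
  shows "qmult S (qclass S P) (qclass S Q) = qclass S (P * Q)"
proof
  fix m :: mon3
  obtain i j l where m: "m = (i,j,l)" by (cases m)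
  show "qmult S (qclass S P) (qclass S Q) m = qclass S (P * Q) m"
  proof (cases "m \<in> S")
    case True
    have "(i',j',l') \<in> S \<and> (i - i', j - j', l - l') \<in> S" if "i' \<le> i" "j' \<le> j" "l' \<le> l" for i' j' l'
      using assms True m that unfolding down_closed_def by (meson diff_le_self)
    then show ?thesis
      using True by (auto simp: qmult_def qclass_def m coeff3_mult intro!: sum.cong)
  qed (simp add: qmult_def qclass_def m)
qed

lemma qpow_qclass:
  assumes "down_closed S" "(0,0,0) \<in> S"
  shows "qpow S (qclass S P) t = qclass S (P ^ t)"
proof (induction t)
  case 0
  show ?case using assms(2) by (auto simp: qpow_def qone_def qclass_def coeff3_1)
next
  case (Suc t)
  then show ?case by (simp add: qpow_def qmult_qclass[OF assms(1)])
qed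

lemma qclass_add: "qclass S (P + Q) = qclass S P + qclass S Q"
  by (auto simp: qclass_def coeff3_add)

lemma qclass_0: "qclass S 0 = 0"
  by (auto simp: qclass_def coeff3_0)

lemma qclass_sum: "qclass S (\<Sum>x\<in>A. F x) = (\<Sum>x\<in>A. qclass S (F x))"
  by (induction A rule: infinite_finite_induct) (auto simp: qclass_add qclass_0)

lemma qclass_monom3: "m \<in> S \<Longrightarrow> qclass S (monom3 m) = delta m"
  by (auto simp: qclass_def coeff3_monom3 delta_def)

lemma linear_qmult: "Vector_Spaces.linear fscale fscale (qmult S g)"
  unfolding linear_fscale_iff
  by (auto simp: fun_eq_iff qmult_def fscale_def split_def sum.distrib distrib_left
      sum_distrib_left mult.left_commute)

lemma qmult_0_right: "qmult S g 0 = 0"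
  using fun_spaces.linear_0[OF linear_qmult] .

definition homog :: "nat \<Rightarrow> 'k::comm_ring_1 poly poly poly \<Rightarrow> bool" where
  "homog d P \<longleftrightarrow> (\<forall>m. coeff3 P m \<noteq> 0 \<longrightarrow> mdeg m = d)"

definition z_free :: "'k::comm_ring_1 poly poly poly \<Rightarrow> bool" where
  "z_free P \<longleftrightarrow> (\<forall>i j l. coeff3 P (i,j,l) \<noteq> 0 \<longrightarrow> l = 0)"

lemma homog_mult: "homog d P \<Longrightarrow> homog e Q \<Longrightarrow> homog (d + e) (P * Q)"
  unfolding homog_def
proof (intro allI impI)
  fix m assume P: "\<forall>m. coeff3 P m \<noteq> 0 \<longrightarrow> mdeg m = d" and Q: "\<forall>m. coeff3 Q m \<noteq> 0 \<longrightarrow> mdeg m = e"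
    and nz: "coeff3 (P * Q) m \<noteq> 0"
  obtain i j l where m: "m = (i,j,l)" by (cases m)
  from nz obtain i' j' l' where "i' \<le> i" "j' \<le> j" "l' \<le> l"
    "coeff3 P (i',j',l') \<noteq> 0" "coeff3 Q (i - i', j - j', l - l') \<noteq> 0"
    unfolding m by (rule coeff3_mult_nonzero)
  with P Q show "mdeg m = d + e" by (force simp: m mdeg_def)
qed

lemma z_free_mult: "z_free P \<Longrightarrow> z_free Q \<Longrightarrow> z_free (P * Q)"
  unfolding z_free_def
proof (intro allI impI)
  fix i j l assume P: "\<forall>i j l. coeff3 P (i,j,l) \<noteq> 0 \<longrightarrow> l = 0"
    and Q: "\<forall>i j l. coeff3 Q (i,j,l) \<noteq> 0 \<longrightarrow> l = 0" and nz: "coeff3 (P * Q) (i,j,l) \<noteq> 0"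
  from nz obtain i' j' l' where "l' \<le> l"
    "coeff3 P (i',j',l') \<noteq> 0" "coeff3 Q (i - i', j - j', l - l') \<noteq> 0"
    by (rule coeff3_mult_nonzero)
  with P Q show "l = 0" by force
qed

lemma homog_add: "homog d P \<Longrightarrow> homog d Q \<Longrightarrow> homog d (P + Q)"
  unfolding homog_def coeff3_add by (metis add.right_neutral)

lemma z_free_add: "z_free P \<Longrightarrow> z_free Q \<Longrightarrow> z_free (P + Q)"
  unfolding z_free_def coeff3_add by (metis add.right_neutral)

lemma homog_const3_mult: "homog d P \<Longrightarrow> homog d (const3 c * P)"
  unfolding homog_def coeff3_const3_mult by (metis mult_zero_right)

lemma z_free_const3_mult: "z_free P \<Longrightarrow> z_free (const3 c * P)"
  unfolding z_free_def coeff3_const3_mult by (metis mult_zero_right)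

lemma homog_monom3: "homog (mdeg m) (monom3 m)"
  unfolding homog_def by (simp add: coeff3_monom3 delta_def)

lemma z_free_monom3: "z_free (monom3 (i,j,0))"
  unfolding z_free_def by (simp add: coeff3_monom3 delta_def)

lemma homog_power: "homog d P \<Longrightarrow> homog (n * d) (P ^ n)"
proof (induction n)
  case 0
  show ?case by (simp add: homog_def coeff3_1 mdeg_def)
qed (auto dest: homog_mult)

lemma z_free_power: "z_free P \<Longrightarrow> z_free (P ^ n)"
proof (induction n)
  case 0
  show ?case by (simp add: z_free_def coeff3_1)
qed (auto intro: z_free_mult)

definition poly_rep :: "mon3 set \<Rightarrow> (mon3 \<Rightarrow> 'k) \<Rightarrow> 'k::comm_ring_1 poly poly poly" where
  "poly_rep S f = (\<Sum>m\<in>S. const3 (f m) * monom3 m)"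

lemma coeff3_poly_rep: "finite S \<Longrightarrow> coeff3 (poly_rep S f) m = (if m \<in> S then f m else 0)"
  by (simp add: poly_rep_def coeff3_sum coeff3_const3_mult coeff3_monom3 delta_def if_distrib
      cong: if_cong)

lemma qclass_poly_rep: "finite S \<Longrightarrow> f \<in> supported_on S \<Longrightarrow> qclass S (poly_rep S f) = f"
  by (auto simp: qclass_def coeff3_poly_rep supported_on_def fun_eq_iff)

lemma homog_poly_rep:
  "finite S \<Longrightarrow> f \<in> supported_on {m \<in> S. mdeg m = d} \<Longrightarrow> homog d (poly_rep S f)"
  unfolding homog_def by (auto simp: coeff3_poly_rep supported_on_def)

lemma z_free_poly_rep:
  "finite S \<Longrightarrow> f \<in> supported_on {m \<in> S. snd (snd m) = 0} \<Longrightarrow> z_free (poly_rep S f)"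
  unfolding z_free_def by (auto simp: coeff3_poly_rep supported_on_def)

lemma qclass_homog: "homog d P \<Longrightarrow> qclass S P \<in> supported_on {m \<in> S. mdeg m = d}"
  by (auto simp: supported_on_def qclass_def homog_def)

lemma qclass_homog_z_free:
  "homog d P \<Longrightarrow> z_free P \<Longrightarrow> qclass S P \<in> supported_on {m \<in> S. mdeg m = d \<and> snd (snd m) = 0}"
  by (force simp: supported_on_def qclass_def homog_def z_free_def)

section \<open>Powers of a linear form on \<open>B[z]/(z\<^sup>c)\<close>\<close>

text \<open>For \<open>L \<in> A\<^sub>1\<close>, \<open>lin_poly L\<close> is the linear form of \<open>k[x,y,z]\<close> representing it and
  \<open>lin_xy L\<close> its part \<open>l\<close> in \<open>x, y\<close>, so that \<open>L = l + \<lambda> z\<close>.\<close>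

definition lin_xy :: "(mon3 \<Rightarrow> 'k) \<Rightarrow> 'k::comm_ring_1 poly poly poly" where
  "lin_xy L = const3 (L (1,0,0)) * monom3 (1,0,0) + const3 (L (0,1,0)) * monom3 (0,1,0)"

definition lin_poly :: "(mon3 \<Rightarrow> 'k) \<Rightarrow> 'k::comm_ring_1 poly poly poly" where
  "lin_poly L = const3 (L (0,0,1)) * monom3 (0,0,1) + lin_xy L"

lemma homog_lin_xy: "homog 1 (lin_xy L)"
  unfolding lin_xy_def
  using homog_monom3[of "(1,0,0)"] homog_monom3[of "(0,1,0)"]
  by (intro homog_add homog_const3_mult) (simp_all add: mdeg_def)

lemma z_free_lin_xy: "z_free (lin_xy L)"
  unfolding lin_xy_def by (intro z_free_add z_free_const3_mult z_free_monom3)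

lemma homog_lin_poly: "homog 1 (lin_poly L)"
  unfolding lin_poly_def using homog_monom3[of "(0,0,1)"]
  by (intro homog_add homog_const3_mult homog_lin_xy) (simp add: mdeg_def)

lemma qclass_lin_poly:
  assumes "L \<in> graded S 1"
  shows "qclass S (lin_poly L) = L"
proof
  fix m :: mon3
  have L: "L m \<noteq> 0 \<Longrightarrow> m \<in> S \<and> mdeg m = 1" using assms unfolding graded_def by blast
  have "mdeg m = 1 \<longleftrightarrow> m = (1,0,0) \<or> m = (0,1,0) \<or> m = (0,0,1)"
    by (cases m) (auto simp: mdeg_def)
  then show "qclass S (lin_poly L) m = L m"
    using L by (auto simp: qclass_def lin_poly_def lin_xy_def coeff3_add coeff3_const3_mult
        coeff3_monom3 delta_def)
qed

lemma lin_poly_power_mult: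
  "lin_poly L ^ t * F =
     (\<Sum>k\<le>t. monom3 (0,0,k) * (const3 (of_nat (t choose k) * L (0,0,1) ^ k) * (lin_xy L ^ (t - k) * F)))"
proof -
  have "lin_poly L ^ t * F =
      (\<Sum>k\<le>t. of_nat (t choose k) * (const3 (L (0,0,1)) * monom3 (0,0,1)) ^ k * lin_xy L ^ (t - k) * F)"
    unfolding lin_poly_def binomial_ring by (simp add: sum_distrib_right)
  also have "\<dots> = (\<Sum>k\<le>t. monom3 (0,0,k) *
      (const3 (of_nat (t choose k) * L (0,0,1) ^ k) * (lin_xy L ^ (t - k) * F)))"
    by (simp add: power_mult_distrib const3_power monom3_z_power[simplified] of_nat_eq_const3
        const3_mult[symmetric] ac_simps)
  finally show ?thesis .
qed

text \<open>\<open>S\<close> is the monomial basis of \<open>B[z]/(z\<^sup>c)\<close> for a monomial quotient \<open>B\<close> of \<open>k[x,y]\<close>;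
  \<open>mons d\<close> and \<open>mons0 d\<close> are the monomial bases of \<open>A\<^sub>d\<close> and of \<open>B\<^sub>d \<subseteq> A\<^sub>d\<close>.\<close>

locale monomial_cylinder =
  fixes S :: "mon3 set" and c :: nat
  assumes down_closed: "down_closed S" and finite_S: "finite S" and origin_mem: "(0,0,0) \<in> S"
    and z_bound: "\<And>i j l. (i,j,l) \<in> S \<Longrightarrow> l < c"
    and z_uniform: "\<And>i j l l'. l < c \<Longrightarrow> l' < c \<Longrightarrow> (i,j,l) \<in> S \<longleftrightarrow> (i,j,l') \<in> S"
begin

definition mons :: "nat \<Rightarrow> mon3 set" where
  "mons d = {m \<in> S. mdeg m = d}"

definition mons0 :: "nat \<Rightarrow> mon3 set" where
  "mons0 d = {m \<in> S. mdeg m = d \<and> snd (snd m) = 0}"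

lemma finite_mons: "finite (mons d)"
  using finite_S by (simp add: mons_def)

lemma finite_mons0: "finite (mons0 d)"
  using finite_S by (simp add: mons0_def)

lemma c_pos: "0 < c"
  using z_bound origin_mem by blast

lemma graded_eq_supported_on: "graded S d = supported_on (mons d)"
  by (auto simp: graded_def supported_on_def mons_def)

lemma graded_eq_span: "(graded S d :: (mon3 \<Rightarrow> 'k::field) set) = fun_space.span (delta ` mons d)"
  by (simp add: graded_eq_supported_on span_delta[OF finite_mons])

lemma delta_graded: "m \<in> mons d \<Longrightarrow> delta m \<in> graded S d"
  by (auto simp: graded_eq_supported_on supported_on_def delta_def)

lemma supported_on_mons0_graded: "supported_on (mons0 d) \<subseteq> graded S d"
  unfolding graded_eq_supported_on by (rule supported_on_mono) (auto simp: mons0_def mons_def)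

lemma qclass_high_z_power: "c \<le> k \<Longrightarrow> qclass S (monom3 (0,0,k) * G) = 0"
  using z_bound by (fastforce simp: qclass_def coeff3_monom3_z_mult)

lemma qmult_qpow_qclass:
  assumes "L \<in> graded S 1"
  shows "qmult S (qpow S L t) (qclass S F) = qclass S (lin_poly L ^ t * F)"
  using qpow_qclass[OF down_closed origin_mem, of "lin_poly L"] qclass_lin_poly[OF assms]
  by (simp add: qmult_qclass[OF down_closed])

lemma qmult_qpow_graded:
  assumes L: "L \<in> graded S 1" and f: "f \<in> graded S i"
  shows "qmult S (qpow S L t) f \<in> graded S (i + t)"
proof -
  have "f \<in> supported_on S" using f by (auto simp: graded_def supported_on_def)
  then have "qmult S (qpow S L t) f = qclass S (lin_poly L ^ t * poly_rep S f)"
    using qmult_qpow_qclass[OF L] qclass_poly_rep[OF finite_S] by metis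
  moreover have "homog (t * 1 + i) (lin_poly L ^ t * poly_rep S f)"
    using f homog_mult[OF homog_power[OF homog_lin_poly] homog_poly_rep[OF finite_S]]
    by (simp add: graded_eq_supported_on mons_def)
  ultimately show ?thesis
    using qclass_homog by (fastforce simp: graded_eq_supported_on mons_def add.commute)
qed

lemma qmult_lin_xy_power_mons0:
  assumes "f \<in> supported_on (mons0 i)"
  shows "qmult S (qclass S (lin_xy L ^ s)) f \<in> supported_on (mons0 (i + s))"
proof -
  have f: "f \<in> supported_on {m \<in> S. mdeg m = i}" "f \<in> supported_on {m \<in> S. snd (snd m) = 0}"
    "f \<in> supported_on S"
    using assms by (auto simp: mons0_def supported_on_def)
  have "qmult S (qclass S (lin_xy L ^ s)) f = qclass S (lin_xy L ^ s * poly_rep S f)"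
    using qmult_qclass[OF down_closed] qclass_poly_rep[OF finite_S f(3)] by metis
  moreover have "homog (s * 1 + i) (lin_xy L ^ s * poly_rep S f)"
    using homog_mult[OF homog_power[OF homog_lin_xy] homog_poly_rep[OF finite_S f(1)]] .
  moreover have "z_free (lin_xy L ^ s * poly_rep S f)"
    using z_free_mult[OF z_free_power[OF z_free_lin_xy] z_free_poly_rep[OF finite_S f(2)]] .
  ultimately show ?thesis
    using qclass_homog_z_free by (fastforce simp: mons0_def add.commute)
qed

text \<open>Each term \<open>z\<^sup>k lin_xy\<^sup>t\<^sup>-\<^sup>k\<close> of the binomial expansion of \<open>L\<^sup>t\<close> vanishes on \<open>f\<close>:
  through \<open>z\<^sup>k\<close> if \<open>k \<ge> c\<close>, and through the factor \<open>lin_xy\<^sup>t\<^sup>+\<^sup>1\<^sup>-\<^sup>c\<close> otherwise.\<close>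

lemma qmult_qpow_eq_0:
  assumes L: "L \<in> graded S 1" and ct: "c \<le> t" and f: "f \<in> supported_on S"
    and kills: "qmult S (qclass S (lin_xy L ^ (t + 1 - c))) f = 0"
  shows "qmult S (qpow S L t) f = 0"
proof -
  define s where "s = t + 1 - c"
  define F where "F = poly_rep S f"
  have F: "qclass S F = f" unfolding F_def using qclass_poly_rep[OF finite_S f] .
  have sF: "qclass S (lin_xy L ^ s * F) = 0"
    using kills qmult_qclass[OF down_closed] F by (metis s_def)
  have "qclass S (monom3 (0,0,k) * (const3 (of_nat (t choose k) * L (0,0,1) ^ k) *
      (lin_xy L ^ (t - k) * F))) = 0" for k
  proof (cases "c \<le> k")
    case False
    define r where "r = t - k - s"
    have "t - k = r + s" using False ct by (simp add: r_def s_def)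
    define G where "G = monom3 (0,0,k) * const3 (of_nat (t choose k) * L (0,0,1) ^ k) * lin_xy L ^ r"
    have split: "monom3 (0,0,k) * (const3 (of_nat (t choose k) * L (0,0,1) ^ k) * (lin_xy L ^ (t - k) * F)) =
        G * (lin_xy L ^ s * F)"
      unfolding G_def using \<open>t - k = r + s\<close> by (simp add: power_add ac_simps)
    have "qclass S (G * (lin_xy L ^ s * F)) = 0"
      using qmult_qclass[OF down_closed, of G "lin_xy L ^ s * F"] sF qmult_0_right by metis
    then show ?thesis by (simp only: split)
  qed (rule qclass_high_z_power)
  then show ?thesis
    using qmult_qpow_qclass[OF L, of t F] F by (simp add: lin_poly_power_mult qclass_sum)
qed

lemma lin_xy_power_kernel:
  fixes L :: "mon3 \<Rightarrow> 'k::field"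
  assumes "card (mons0 (i + s)) < card (mons0 i)"
  obtains f :: "mon3 \<Rightarrow> 'k"
  where "f \<in> supported_on (mons0 i)" "f \<noteq> 0" "qmult S (qclass S (lin_xy L ^ s)) f = 0"
proof -
  define \<Phi> where "\<Phi> = qmult S (qclass S (lin_xy L ^ s))"
  have span0: "fun_space.span (delta ` mons0 d) = (supported_on (mons0 d) :: (mon3 \<Rightarrow> 'k) set)" for d
    using span_delta[OF finite_mons0] .
  have "\<not> inj_on \<Phi> (fun_space.span (delta ` mons0 i))"
  proof
    assume inj: "inj_on \<Phi> (fun_space.span (delta ` mons0 i))"
    have img: "\<Phi> ` fun_space.span (delta ` mons0 i) \<subseteq> fun_space.span (delta ` mons0 (i + s))"
      unfolding span0 \<Phi>_def using qmult_lin_xy_power_mons0 by blast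
    have "card (delta ` mons0 i :: (mon3 \<Rightarrow> 'k) set) \<le> card (delta ` mons0 (i + s) :: (mon3 \<Rightarrow> 'k) set)"
      using fun_spaces.card_le_if_linear_inj_on_span[OF linear_qmult finite_imageI[OF finite_mons0]
          independent_delta_image] img inj
      unfolding \<Phi>_def by blast
    then show False using assms by (simp add: card_delta_image)
  qed
  then show ?thesis
    using that fun_spaces.linear_inj_on_iff_eq_0[OF linear_qmult fun_space.subspace_span] span0
    unfolding \<Phi>_def by metis
qed

lemma not_inj_not_onto_if_kernel:
  fixes L :: "mon3 \<Rightarrow> 'k::field"
  assumes L: "L \<in> graded S 1" and ct: "c \<le> t"
    and B_drop: "card (mons0 (i + (t + 1 - c))) < card (mons0 i)"
    and A_rise: "card (mons i) \<le> card (mons (i + t))"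
  shows "\<not> inj_on (qmult S (qpow S L t)) (graded S i) \<and>
         qmult S (qpow S L t) ` graded S i \<noteq> graded S (i + t)"
proof -
  define T where "T = qmult S (qpow S L t)"
  obtain f :: "mon3 \<Rightarrow> 'k" where f: "f \<in> supported_on (mons0 i)" "f \<noteq> 0"
    "qmult S (qclass S (lin_xy L ^ (t + 1 - c))) f = 0"
    using lin_xy_power_kernel[OF B_drop] by blast
  have fi: "f \<in> graded S i" using f(1) supported_on_mons0_graded by blast
  have "T f = 0"
    using qmult_qpow_eq_0[OF L ct _ f(3)] fi by (auto simp: T_def graded_def supported_on_def)
  then have not_inj: "\<not> inj_on T (graded S i)"
    using fi f(2) fun_spaces.linear_0[OF linear_qmult] fun_space.subspace_0[OF fun_space.subspace_span]
    by (metis T_def graded_eq_span inj_onD)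
  moreover have "T ` graded S i \<noteq> graded S (i + t)"
  proof
    assume "T ` graded S i = graded S (i + t)"
    then have "inj_on T (graded S i)"
      using fun_spaces.linear_onto_span_imp_inj_on[OF linear_qmult finite_imageI[OF finite_mons]
          independent_delta_image independent_delta_image] A_rise
      by (simp add: T_def graded_eq_span card_delta_image)
    then show False using not_inj by blast
  qed
  ultimately show ?thesis by (simp add: T_def)
qed

text \<open>The coefficient of \<open>z\<^sup>c\<^sup>-\<^sup>1\<close>, stored at \<open>z\<close>-exponent \<open>0\<close> so that it lies in \<open>B\<close>.\<close>

definition top_z_coeff :: "(mon3 \<Rightarrow> 'k::field) \<Rightarrow> mon3 \<Rightarrow> 'k" where
  "top_z_coeff g = (\<lambda>(p,q,l). if l = 0 then g (p,q,c - 1) else 0)"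

lemma linear_top_z_coeff: "Vector_Spaces.linear fscale fscale top_z_coeff"
  unfolding linear_fscale_iff by (auto simp: top_z_coeff_def fun_eq_iff fscale_def)

lemma top_z_coeff_delta: "top_z_coeff (delta (p,q,c - 1)) = delta (p,q,0)"
  by (auto simp: top_z_coeff_def delta_def fun_eq_iff)

lemma top_z_coeff_qclass_z_power:
  assumes "z_free G"
  shows "top_z_coeff (qclass S (monom3 (0,0,w) * G)) = (if w = c - 1 then qclass S G else 0)"
proof
  fix m :: mon3
  obtain p q l where m: "m = (p,q,l)" by (cases m)
  have G: "l' \<noteq> 0 \<Longrightarrow> coeff3 G (p,q,l') = 0" for l' using assms unfolding z_free_def by blast
  have "(p,q,c - 1) \<in> S \<longleftrightarrow> (p,q,0) \<in> S" using z_uniform[of "c - 1" 0] c_pos by simp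
  then show "top_z_coeff (qclass S (monom3 (0,0,w) * G)) m = (if w = c - 1 then qclass S G else 0) m"
    using G[of "c - 1 - w"] G[of l]
    by (auto simp: m top_z_coeff_def qclass_def coeff3_monom3_z_mult)
qed

lemma top_z_coeff_qpow_monom:
  fixes L :: "mon3 \<Rightarrow> 'k::field"
  assumes L: "L \<in> graded S 1" and ct: "c \<le> t" and mS: "(p,q,r) \<in> S"
  shows "top_z_coeff (qmult S (qpow S L t) (delta (p,q,r))) =
    qmult S (qclass S (lin_xy L ^ (t + 1 - c)))
      (qclass S (const3 (of_nat (t choose (c - 1 - r)) * L (0,0,1) ^ (c - 1 - r)) *
                 (lin_xy L ^ r * monom3 (p,q,0))))"
    (is "_ = ?rhs")
proof -
  have rc: "r < c" using z_bound mS by blast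
  define G where "G k = const3 (of_nat (t choose k) * L (0,0,1) ^ k) * (lin_xy L ^ (t - k) * monom3 (p,q,0))"
    for k
  have zG: "z_free (G k)" for k
    unfolding G_def by (intro z_free_const3_mult z_free_mult z_free_power z_free_lin_xy z_free_monom3)
  have "monom3 (0,0,k) * (const3 (of_nat (t choose k) * L (0,0,1) ^ k) * (lin_xy L ^ (t - k) * monom3 (p,q,r))) =
      monom3 (0,0,k + r) * G k" for k
  proof -
    have "monom3 (0,0,k) * monom3 (p,q,r) = monom3 (p,q,0) * (monom3 (0,0,k + r) :: 'k poly poly poly)"
      by (simp add: monom3_mult)
    then show ?thesis by (simp add: G_def ac_simps)
  qed
  then have "qmult S (qpow S L t) (delta (p,q,r)) = (\<Sum>k\<le>t. qclass S (monom3 (0,0,k + r) * G k))"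
    using qmult_qpow_qclass[OF L, of t "monom3 (p,q,r)"]
    by (simp add: qclass_monom3[OF mS] lin_poly_power_mult qclass_sum)
  then have "top_z_coeff (qmult S (qpow S L t) (delta (p,q,r))) =
      (\<Sum>k\<le>t. if k + r = c - 1 then qclass S (G k) else 0)"
    by (simp add: fun_spaces.linear_sum[OF linear_top_z_coeff] top_z_coeff_qclass_z_power[OF zG])
  also have "\<dots> = (\<Sum>k\<le>t. if k = c - 1 - r then qclass S (G k) else 0)"
    using rc by (intro sum.cong) auto
  also have "\<dots> = qclass S (G (c - 1 - r))"
    using ct by simp
  also have "\<dots> = ?rhs"
  proof -
    have "t - (c - 1 - r) = (t + 1 - c) + r" using ct rc by simp
    then show ?thesis by (simp add: qmult_qclass[OF down_closed] G_def power_add ac_simps)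
  qed
  finally show ?thesis .
qed

lemma top_z_coeff_qpow_delta:
  fixes L :: "mon3 \<Rightarrow> 'k::field"
  assumes L: "L \<in> graded S 1" and ct: "c \<le> t" and m: "m \<in> mons i"
  shows "top_z_coeff (qmult S (qpow S L t) (delta m)) \<in>
           qmult S (qclass S (lin_xy L ^ (t + 1 - c))) ` supported_on (mons0 i)"
proof -
  obtain p q r where m_eq: "m = (p,q,r)" by (cases m)
  have mS: "(p,q,r) \<in> S" and deg: "p + q + r = i" using m m_eq by (auto simp: mons_def mdeg_def)
  have "homog (r * 1 + mdeg (p,q,0)) (lin_xy L ^ r * monom3 (p,q,0))"
    by (intro homog_mult homog_power homog_lin_xy homog_monom3)
  then have "qclass S (const3 (of_nat (t choose (c - 1 - r)) * L (0,0,1) ^ (c - 1 - r)) *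
      (lin_xy L ^ r * monom3 (p,q,0))) \<in> supported_on (mons0 i)"
    using qclass_homog_z_free[OF homog_const3_mult
        z_free_const3_mult[OF z_free_mult[OF z_free_power[OF z_free_lin_xy] z_free_monom3]]] deg
    by (fastforce simp: mons0_def mdeg_def add.commute)
  then show ?thesis
    unfolding m_eq top_z_coeff_qpow_monom[OF L ct mS] by blast
qed

lemma top_z_coeff_qpow:
  fixes L :: "mon3 \<Rightarrow> 'k::field"
  assumes L: "L \<in> graded S 1" and ct: "c \<le> t" and g: "g \<in> graded S i"
  shows "top_z_coeff (qmult S (qpow S L t) g) \<in>
           qmult S (qclass S (lin_xy L ^ (t + 1 - c))) ` supported_on (mons0 i)"
proof -
  let ?V = "qmult S (qclass S (lin_xy L ^ (t + 1 - c))) ` supported_on (mons0 i)"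
  have "fun_space.subspace ?V"
    using fun_spaces.linear_subspace_image[OF linear_qmult fun_space.subspace_span]
    by (simp add: span_delta[OF finite_mons0, symmetric])
  moreover have "(top_z_coeff \<circ> qmult S (qpow S L t)) ` delta ` mons i \<subseteq> ?V"
    using top_z_coeff_qpow_delta[OF L ct] by auto
  ultimately have "fun_space.span ((top_z_coeff \<circ> qmult S (qpow S L t)) ` delta ` mons i) \<subseteq> ?V"
    by (rule fun_space.span_minimal[rotated])
  moreover have "(top_z_coeff \<circ> qmult S (qpow S L t)) g \<in>
      fun_space.span ((top_z_coeff \<circ> qmult S (qpow S L t)) ` delta ` mons i)"
    using g fun_spaces.linear_span_image[OF Vector_Spaces.linear_compose[OF linear_qmult linear_top_z_coeff]]
    by (simp add: graded_eq_span) blast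
  ultimately show ?thesis by auto
qed

lemma qpow_not_onto_if_top_z_obstruction:
  fixes L :: "mon3 \<Rightarrow> 'k::field"
  assumes L: "L \<in> graded S 1" and ct: "c \<le> t"
    and B_rise: "card (mons0 i) < card (mons0 (i + (t + 1 - c)))"
  shows "qmult S (qpow S L t) ` graded S i \<noteq> graded S (i + t)"
proof
  define s where "s = t + 1 - c"
  define \<Phi> where "\<Phi> = qmult S (qclass S (lin_xy L ^ s))"
  assume onto: "qmult S (qpow S L t) ` graded S i = graded S (i + t)"
  have "delta ` mons0 (i + s) \<subseteq> fun_space.span (\<Phi> ` delta ` mons0 i)"
  proof
    fix x :: "mon3 \<Rightarrow> 'k" assume "x \<in> delta ` mons0 (i + s)"
    then obtain p q where pq: "(p,q,0) \<in> S" "p + q = i + s" "x = delta (p,q,0)"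
      by (auto simp: mons0_def mdeg_def)
    have "(p,q,c - 1) \<in> mons (i + t)"
      using pq z_uniform[of 0 "c - 1"] c_pos ct by (auto simp: mons_def mdeg_def s_def)
    then obtain g where g: "g \<in> graded S i" "qmult S (qpow S L t) g = delta (p,q,c - 1)"
      using onto delta_graded by (metis imageE)
    then have "x = top_z_coeff (qmult S (qpow S L t) g)" using pq(3) top_z_coeff_delta[of p q] by metis
    also have "\<dots> \<in> \<Phi> ` fun_space.span (delta ` mons0 i)"
      using top_z_coeff_qpow[OF L ct g(1)] by (simp add: \<Phi>_def s_def span_delta[OF finite_mons0])
    finally show "x \<in> fun_space.span (\<Phi> ` delta ` mons0 i)"
      by (simp add: fun_spaces.linear_span_image[OF linear_qmult] \<Phi>_def)
  qed
  then have "card (delta ` mons0 (i + s) :: (mon3 \<Rightarrow> 'k) set) \<le> card (\<Phi> ` delta ` mons0 i)"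
    using fun_space.independent_span_bound[OF finite_imageI[OF finite_imageI[OF finite_mons0]]
        independent_delta_image] by blast
  also have "\<dots> \<le> card (mons0 i)"
    using card_image_le[OF finite_imageI[OF finite_mons0]] by (metis card_delta_image)
  finally show False using B_rise by (simp add: card_delta_image s_def)
qed

lemma not_inj_not_onto_if_top_z_obstruction:
  fixes L :: "mon3 \<Rightarrow> 'k::field"
  assumes L: "L \<in> graded S 1" and ct: "c \<le> t"
    and B_rise: "card (mons0 i) < card (mons0 (i + (t + 1 - c)))"
    and A_drop: "card (mons (i + t)) \<le> card (mons i)"
  shows "\<not> inj_on (qmult S (qpow S L t)) (graded S i) \<and>
         qmult S (qpow S L t) ` graded S i \<noteq> graded S (i + t)"
proof -
  define T where "T = qmult S (qpow S L t)"
  have not_onto: "T ` graded S i \<noteq> graded S (i + t)"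
    unfolding T_def by (rule qpow_not_onto_if_top_z_obstruction[OF L ct B_rise])
  moreover have "\<not> inj_on T (graded S i)"
  proof
    assume "inj_on T (graded S i)"
    moreover have "T ` graded S i \<subseteq> graded S (i + t)"
      using qmult_qpow_graded[OF L] by (auto simp: T_def)
    ultimately have "T ` graded S i = graded S (i + t)"
      using fun_spaces.linear_inj_on_span_imp_onto[OF linear_qmult
          finite_imageI[OF finite_mons, where h = delta] independent_delta_image] A_drop
      by (simp add: T_def graded_eq_span card_delta_image)
    then show False using not_onto by blast
  qed
  ultimately show ?thesis by (simp add: T_def)
qed

lemma not_SLP_if_obstruction:
  assumes ct: "c \<le> t"
    and obstruction:
      "card (mons0 (i + (t + 1 - c))) < card (mons0 i) \<and> card (mons i) \<le> card (mons (i + t)) \<or>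
       card (mons0 i) < card (mons0 (i + (t + 1 - c))) \<and> card (mons (i + t)) \<le> card (mons i)"
  shows "\<not> SLP TYPE('k::field) S"
proof
  assume "SLP TYPE('k) S"
  then obtain L :: "mon3 \<Rightarrow> 'k" where L: "L \<in> graded S 1"
    and "inj_on (qmult S (qpow S L t)) (graded S i) \<or>
         qmult S (qpow S L t) ` graded S i = graded S (i + t)"
    using ct c_pos unfolding SLP_def by force
  with obstruction show False
    using not_inj_not_onto_if_kernel[OF L ct] not_inj_not_onto_if_top_z_obstruction[OF L ct] by blast
qed

end

section \<open>The Hilbert function of \<open>B\<close>\<close>

definition diag_count :: "int \<Rightarrow> int \<Rightarrow> int \<Rightarrow> int" where
  "diag_count p q d = max 0 (min (d + 1) (min p (min q (p + q - 1 - d))))"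

lemma diag_count_neg: "d < 0 \<Longrightarrow> diag_count p q d = 0"
  unfolding diag_count_def by simp

lemma card_antidiagonal:
  "int (card {(i,j). i < P \<and> j < Q \<and> i + j = n}) = diag_count (int P) (int Q) (int n)"
proof -
  have "{(i,j). i < P \<and> j < Q \<and> i + j = n} = (\<lambda>i. (i, n - i)) ` {n + 1 - Q..<min P (n + 1)}"
    by (auto simp: image_iff)
  then have "card {(i,j). i < P \<and> j < Q \<and> i + j = n} = card {n + 1 - Q..<min P (n + 1)}"
    by (simp add: card_image inj_on_def)
  then show ?thesis unfolding diag_count_def by (simp add: of_nat_diff) linarith
qed

lemma hilbB_eq_diag_counts:
  assumes "0 < al" "al < a" "0 < be" "be < b"
  shows "int (hilbB a b al be d) =
           diag_count (int a) (int be) d + diag_count (int al) (int b - int be) (d - int be)"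
proof (cases "d < 0")
  case True
  then show ?thesis by (simp add: hilbB_def diag_count_neg)
next
  case False
  then obtain n where d: "d = int n" by (metis nonneg_int_cases not_less)
  define lower where "lower = {(i,j). i < a \<and> j < be \<and> i + j = n}"
  define upper where "upper = {(i,j). i < al \<and> be \<le> j \<and> j < b \<and> i + j = n}"
  have "{(i,j). i < a \<and> j < b \<and> \<not> (al \<le> i \<and> be \<le> j) \<and> int (i + j) = d} = lower \<union> upper"
    using assms unfolding lower_def upper_def d by auto
  moreover have "finite lower" "finite upper"
    by (rule finite_subset[of _ "{..n} \<times> {..n}"], auto simp: lower_def upper_def)+
  moreover have "lower \<inter> upper = {}" by (auto simp: lower_def upper_def)
  moreover have "int (card upper) = diag_count (int al) (int b - int be) (d - int be)"
  proof (cases "be \<le> n")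
    case True
    have "upper = (\<lambda>(i,j). (i, j + be)) ` {(i,j). i < al \<and> j < b - be \<and> i + j = n - be}"
    proof (rule set_eqI, rule iffI)
      fix x assume "x \<in> upper"
      then obtain i j where "x = (i,j)" "i < al" "be \<le> j" "j < b" "i + j = n"
        unfolding upper_def by blast
      then show "x \<in> (\<lambda>(i,j). (i, j + be)) ` {(i,j). i < al \<and> j < b - be \<and> i + j = n - be}"
        by (intro image_eqI[of _ _ "(i, j - be)"]) auto
    qed (use True in \<open>auto simp: upper_def\<close>)
    then have "card upper = card {(i,j). i < al \<and> j < b - be \<and> i + j = n - be}"
      by (simp add: card_image inj_on_def)
    then show ?thesis using card_antidiagonal[of al "b - be" "n - be"] True assms d by (simp add: of_nat_diff)
  next
    case False
    then have "upper = {}" unfolding upper_def by auto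
    then show ?thesis using False d by (simp add: diag_count_neg)
  qed
  ultimately show ?thesis
    using card_antidiagonal[of a be n] False d by (simp add: hilbB_def card_Un_disjoint lower_def)
qed

lemma hilbB_swap: "hilbB a b al be = hilbB b a be al"
proof
  fix d
  have "{(i,j). i < a \<and> j < b \<and> \<not> (al \<le> i \<and> be \<le> j) \<and> int (i + j) = d} =
        prod.swap ` {(j,i). j < b \<and> i < a \<and> \<not> (be \<le> j \<and> al \<le> i) \<and> int (j + i) = d}"
    by (auto simp: image_iff add.commute)
  then show "hilbB a b al be d = hilbB b a be al d"
    unfolding hilbB_def by (simp add: card_image)
qed

text \<open>With \<open>p\<^sub>1 = al\<close>, \<open>p\<^sub>2 = be\<close>, \<open>X = a - al\<close>, \<open>Y = b - be\<close> this is the Hilbert function of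
  \<open>B\<close>; the symmetry \<open>x \<leftrightarrow> y\<close> lets us assume \<open>Y \<le> X\<close>, and then the socle degree is
  \<open>p\<^sub>1 + p\<^sub>2 + X - 2\<close>. All facts about \<open>stair\<close> below are piecewise-linear arithmetic.\<close>

definition stair :: "int \<Rightarrow> int \<Rightarrow> int \<Rightarrow> int \<Rightarrow> int \<Rightarrow> int" where
  "stair p\<^sub>1 p\<^sub>2 X Y d = diag_count (p\<^sub>1 + X) p\<^sub>2 d + diag_count p\<^sub>1 Y (d - p\<^sub>2)"

declare [[smt_timeout = 120]]

context
  fixes p\<^sub>1 p\<^sub>2 X Y :: int
  assumes pos: "1 \<le> p\<^sub>1" "1 \<le> p\<^sub>2" "1 \<le> Y" and YX: "Y \<le> X"
begin

lemma stair_neg: "d < 0 \<Longrightarrow> stair p\<^sub>1 p\<^sub>2 X Y d = 0"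
  using pos unfolding stair_def diag_count_def by simp

lemma stair_top: "1 \<le> stair p\<^sub>1 p\<^sub>2 X Y (p\<^sub>1 + p\<^sub>2 + X - 2)"
  using pos YX unfolding stair_def diag_count_def by (smt (verit))

lemma stair_above_top: "p\<^sub>1 + p\<^sub>2 + X - 2 < d \<Longrightarrow> stair p\<^sub>1 p\<^sub>2 X Y d = 0"
  using pos YX unfolding stair_def diag_count_def by (smt (verit))

lemma stair_le_reflect:
  "X - Y \<le> p\<^sub>2 \<Longrightarrow> 2 * k \<le> p\<^sub>1 + p\<^sub>2 + X - 2 \<Longrightarrow>
     stair p\<^sub>1 p\<^sub>2 X Y k \<le> stair p\<^sub>1 p\<^sub>2 X Y (p\<^sub>1 + p\<^sub>2 + X - 2 - k)"
  using pos YX unfolding stair_def diag_count_def by (smt (verit))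

lemma stair_reflect_le:
  "p\<^sub>2 \<le> X - Y \<Longrightarrow> 2 * k \<le> p\<^sub>1 + p\<^sub>2 + X - 2 \<Longrightarrow>
     stair p\<^sub>1 p\<^sub>2 X Y (p\<^sub>1 + p\<^sub>2 + X - 2 - k) \<le> stair p\<^sub>1 p\<^sub>2 X Y k"
  using pos YX unfolding stair_def diag_count_def by (smt (verit))

lemma stair_defect_up_eq:
  "2 * k \<le> p\<^sub>1 + p\<^sub>2 + X - 2 \<Longrightarrow>
     stair p\<^sub>1 p\<^sub>2 X Y k - stair p\<^sub>1 p\<^sub>2 X Y (p\<^sub>1 + p\<^sub>2 + X - 1 - k) =
     (if 0 \<le> k \<and> k < min (p\<^sub>1 + X) p\<^sub>2 then 1 else 0)
       + diag_count p\<^sub>1 Y (k - p\<^sub>2) - diag_count p\<^sub>1 Y (k - (X - Y + 1))"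
  using pos YX unfolding stair_def diag_count_def by (smt (verit))

lemma stair_defect_down_eq:
  "2 * k \<le> p\<^sub>1 + p\<^sub>2 + X - 4 \<Longrightarrow>
     stair p\<^sub>1 p\<^sub>2 X Y (p\<^sub>1 + p\<^sub>2 + X - 3 - k) - stair p\<^sub>1 p\<^sub>2 X Y k =
     (if 0 \<le> k + 1 \<and> k + 1 < min (p\<^sub>1 + X) p\<^sub>2 then 1 else 0)
       + diag_count p\<^sub>1 Y (k + 1 - (X - Y)) - diag_count p\<^sub>1 Y (k - p\<^sub>2)"
  using pos YX unfolding stair_def diag_count_def by (smt (verit))

lemma defect_up_three_terms:
  fixes i :: int
  defines "g \<equiv> \<lambda>k. (if 0 \<le> k \<and> k < min (p\<^sub>1 + X) p\<^sub>2 then 1 else 0)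
    + diag_count p\<^sub>1 Y (k - p\<^sub>2) - diag_count p\<^sub>1 Y (k - (X - Y + 1))"
  assumes "2 * i \<le> p\<^sub>1 + p\<^sub>2 + X - 2" "g i < 0" "0 \<le> g (i - 1)" "0 \<le> g (i - 2)"
  shows "0 \<le> g i + g (i - 1) + g (i - 2)"
  using pos YX assms unfolding g_def diag_count_def by (smt (verit))

lemma defect_down_three_terms:
  fixes i :: int
  defines "g \<equiv> \<lambda>k. (if 0 \<le> k + 1 \<and> k + 1 < min (p\<^sub>1 + X) p\<^sub>2 then 1 else 0)
    + diag_count p\<^sub>1 Y (k + 1 - (X - Y)) - diag_count p\<^sub>1 Y (k - p\<^sub>2)"
  assumes "2 * i < p\<^sub>1 + p\<^sub>2 + X - 3" "g i < 0" "0 \<le> g (i - 1)" "0 \<le> g (i - 2)"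
  shows "0 \<le> g i + g (i - 1) + g (i - 2)"
  using pos YX assms unfolding g_def diag_count_def by (smt (verit))

end

section \<open>Hilbert functions that are not almost centered\<close>

lemma window_sum_nonneg:
  fixes g :: "int \<Rightarrow> int" and c :: nat
  assumes "3 \<le> c" and "\<And>k. k < i - 2 \<Longrightarrow> 0 \<le> g k" and "0 \<le> g i + g (i - 1) + g (i - 2)"
  shows "0 \<le> (\<Sum>r<c. g (i - int r))"
proof -
  have split: "{..<c} = {..<3} \<union> {3..<c}" using assms(1) by auto
  have "(\<Sum>r<c. g (i - int r)) = (\<Sum>r<3. g (i - int r)) + (\<Sum>r\<in>{3..<c}. g (i - int r))"
    unfolding split by (rule sum.union_disjoint) auto
  moreover have "(\<Sum>r<3. g (i - int r)) = g i + g (i - 1) + g (i - 2)"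
    by (simp add: numeral_3_eq_3 lessThan_Suc)
  moreover have "0 \<le> (\<Sum>r\<in>{3..<c}. g (i - int r))"
    using assms(2) by (intro sum_nonneg) auto
  ultimately show ?thesis using assms(3) by simp
qed

lemma first_negative_window:
  fixes g :: "int \<Rightarrow> int" and M :: int and c :: nat
  assumes c: "3 \<le> c" and i\<^sub>1: "0 \<le> i\<^sub>1" "2 * i\<^sub>1 \<le> M" "g i\<^sub>1 < 0"
    and below_0: "\<And>k. k < 0 \<Longrightarrow> 0 \<le> g k"
    and three: "\<And>i. 2 * i \<le> M \<Longrightarrow> g i < 0 \<Longrightarrow> 0 \<le> g (i - 1) \<Longrightarrow> 0 \<le> g (i - 2) \<Longrightarrow>
                  0 \<le> g i + g (i - 1) + g (i - 2)"
  obtains i where "0 \<le> i" "2 * i \<le> M" "g i < 0" "0 \<le> (\<Sum>r<c. g (i - int r))"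
proof -
  define P where "P n \<longleftrightarrow> 2 * int n \<le> M \<and> g (int n) < 0" for n
  define n where "n = (LEAST n. P n)"
  have "P (nat i\<^sub>1)" using i\<^sub>1 by (simp add: P_def)
  then have n: "P n" unfolding n_def by (rule LeastI)
  have before: "0 \<le> g k" if "k < int n" for k
  proof (cases "k < 0")
    case False
    then obtain m where "k = int m" by (metis nonneg_int_cases not_less)
    moreover have "\<not> P m" using that \<open>k = int m\<close> not_less_Least[of m P] by (simp add: n_def)
    ultimately show ?thesis using that n by (simp add: P_def)
  qed (rule below_0)
  have "0 \<le> (\<Sum>r<c. g (int n - int r))"
    using n before by (intro window_sum_nonneg[OF c] three) (auto simp: P_def)
  with n show ?thesis by (intro that[of "int n"]) (auto simp: P_def)
qed

lemma sum_reflect_window: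
  fixes F :: "int \<Rightarrow> 'a::comm_monoid_add" and c :: nat
  shows "(\<Sum>r<c. F (e + int c - 1 - int r)) = (\<Sum>r<c. F (e + int r))"
proof -
  have "(\<Sum>r<c. F (e + int c - 1 - int r)) = (\<Sum>r<c. (\<lambda>r. F (e + int r)) (c - Suc r))"
    by (rule sum.cong) (auto simp: of_nat_diff algebra_simps)
  also have "\<dots> = (\<Sum>r<c. F (e + int r))" by (rule sum.nat_diff_reindex)
  finally show ?thesis .
qed

lemma socdeg_eqI: "h D \<noteq> 0 \<Longrightarrow> (\<And>d. D < d \<Longrightarrow> h d = 0) \<Longrightarrow> socdeg h = D"
  unfolding socdeg_def by (rule Greatest_equality) (assumption, metis not_le)

text \<open>The Hilbert function of \<open>B[z]/(z\<^sup>c)\<close> when \<open>h\<close> is that of \<open>B\<close>.\<close>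

definition hilb_zext :: "nat \<Rightarrow> (int \<Rightarrow> nat) \<Rightarrow> int \<Rightarrow> int" where
  "hilb_zext c h d = (\<Sum>r<c. int (h (d - int r)))"

lemma almost_centered_stair_iff:
  fixes h :: "int \<Rightarrow> nat" and p\<^sub>1 p\<^sub>2 X Y :: int
  assumes pos: "1 \<le> p\<^sub>1" "1 \<le> p\<^sub>2" "1 \<le> Y" and YX: "Y \<le> X"
    and h: "\<And>d. int (h d) = stair p\<^sub>1 p\<^sub>2 X Y d"
  defines "D \<equiv> p\<^sub>1 + p\<^sub>2 + X - 2"
  shows "almost_centered h \<longleftrightarrow>
    (\<forall>i. 0 \<le> i \<and> 2 * i \<le> D \<longrightarrow> h (i - 1) \<le> h (D - i) \<and> h (D - i) \<le> h i) \<or>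
    (\<forall>i. 0 \<le> i \<and> 2 * i \<le> D \<longrightarrow> h (D - i + 1) \<le> h i \<and> h i \<le> h (D - i))"
proof -
  have "socdeg h = D"
  proof (rule socdeg_eqI)
    show "h D \<noteq> 0" using h[of D] stair_top[OF pos YX] by (auto simp: D_def)
    show "h d = 0" if "D < d" for d using h[of d] stair_above_top[OF pos YX] that by (simp add: D_def)
  qed
  moreover have "i \<le> D div 2 \<longleftrightarrow> 2 * i \<le> D" for i by presburger
  ultimately show ?thesis unfolding almost_centered_def Let_def by simp
qed

lemma stair_obstruction_up:
  fixes h :: "int \<Rightarrow> nat" and p\<^sub>1 p\<^sub>2 X Y :: int and c :: nat
  assumes pos: "1 \<le> p\<^sub>1" "1 \<le> p\<^sub>2" "1 \<le> Y" and YX: "Y \<le> X" and gap: "X - Y \<le> p\<^sub>2"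
    and c: "3 \<le> c" and h: "\<And>d. int (h d) = stair p\<^sub>1 p\<^sub>2 X Y d" and nac: "\<not> almost_centered h"
  shows "\<exists>i e. 0 \<le> i \<and> i < e \<and> h i < h e \<and> hilb_zext c h (e + int c - 1) \<le> hilb_zext c h i"
proof -
  define D where "D = p\<^sub>1 + p\<^sub>2 + X - 2"
  define g where "g k = stair p\<^sub>1 p\<^sub>2 X Y k - stair p\<^sub>1 p\<^sub>2 X Y (D + 1 - k)" for k
  have "h i \<le> h (D - i)" if "2 * i \<le> D" for i
    using stair_le_reflect[OF pos YX gap, of i] that h[of i] h[of "D - i"] by (simp add: D_def)
  then obtain i\<^sub>1 where i\<^sub>1: "0 \<le> i\<^sub>1" "2 * i\<^sub>1 \<le> D" "g i\<^sub>1 < 0"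
    using nac unfolding almost_centered_stair_iff[OF pos YX h] D_def[symmetric] g_def h[symmetric]
    by (force simp: algebra_simps)
  obtain i where i: "0 \<le> i" "2 * i \<le> D" "g i < 0" "0 \<le> (\<Sum>r<c. g (i - int r))"
  proof (rule first_negative_window[where g = g and M = D, OF c i\<^sub>1])
    show "0 \<le> g k" if "k < 0" for k
      using that stair_neg[OF pos YX, of k] stair_above_top[OF pos YX, of "D + 1 - k"] by (simp add: g_def D_def)
    show "0 \<le> g i + g (i - 1) + g (i - 2)" if "2 * i \<le> D" "g i < 0" "0 \<le> g (i - 1)" "0 \<le> g (i - 2)" for i
      using that defect_up_three_terms[OF pos YX, of i] stair_defect_up_eq[OF pos YX, of i]
        stair_defect_up_eq[OF pos YX, of "i - 1"] stair_defect_up_eq[OF pos YX, of "i - 2"]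
      by (simp add: g_def D_def algebra_simps)
  qed
  have "hilb_zext c h (D + 1 - i + int c - 1) = (\<Sum>r<c. int (h (D + 1 - i + int r)))"
    unfolding hilb_zext_def by (rule sum_reflect_window)
  then have "(\<Sum>r<c. g (i - int r)) = hilb_zext c h i - hilb_zext c h (D + 1 - i + int c - 1)"
    by (simp add: hilb_zext_def g_def h sum_subtractf algebra_simps)
  then show ?thesis
    using i by (intro exI[of _ i] exI[of _ "D + 1 - i"]) (auto simp: g_def h[symmetric])
qed

lemma stair_obstruction_down:
  fixes h :: "int \<Rightarrow> nat" and p\<^sub>1 p\<^sub>2 X Y :: int and c :: nat
  assumes pos: "1 \<le> p\<^sub>1" "1 \<le> p\<^sub>2" "1 \<le> Y" and YX: "Y \<le> X" and gap: "p\<^sub>2 \<le> X - Y"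
    and c: "3 \<le> c" and h: "\<And>d. int (h d) = stair p\<^sub>1 p\<^sub>2 X Y d" and nac: "\<not> almost_centered h"
  shows "\<exists>i e. 0 \<le> i \<and> i < e \<and> h e < h i \<and> hilb_zext c h i \<le> hilb_zext c h (e + int c - 1)"
proof -
  define D where "D = p\<^sub>1 + p\<^sub>2 + X - 2"
  define g where "g k = stair p\<^sub>1 p\<^sub>2 X Y (D - 1 - k) - stair p\<^sub>1 p\<^sub>2 X Y k" for k
  have "h (D - i) \<le> h i" if "2 * i \<le> D" for i
    using stair_reflect_le[OF pos YX gap, of i] that h[of i] h[of "D - i"] by (simp add: D_def)
  then obtain i' where i': "0 \<le> i'" "2 * i' \<le> D" "h (D - i') < h (i' - 1)"
    using nac unfolding almost_centered_stair_iff[OF pos YX h] D_def[symmetric] by force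
  then have "i' \<noteq> 0" using h[of "-1"] stair_neg[OF pos YX, of "-1"] by auto
  then have i\<^sub>1: "0 \<le> i' - 1" "2 * (i' - 1) \<le> D - 2" "g (i' - 1) < 0"
    using i' by (auto simp: g_def h[symmetric] algebra_simps)
  obtain i where i: "0 \<le> i" "2 * i \<le> D - 2" "g i < 0" "0 \<le> (\<Sum>r<c. g (i - int r))"
  proof (rule first_negative_window[where g = g and M = "D - 2", OF c i\<^sub>1])
    show "0 \<le> g k" if "k < 0" for k
      using that stair_neg[OF pos YX, of k] h[of "D - 1 - k", symmetric] by (simp add: g_def)
    show "0 \<le> g i + g (i - 1) + g (i - 2)" if "2 * i \<le> D - 2" "g i < 0" "0 \<le> g (i - 1)" "0 \<le> g (i - 2)"
      for i
      using that defect_down_three_terms[OF pos YX, of i] stair_defect_down_eq[OF pos YX, of i]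
        stair_defect_down_eq[OF pos YX, of "i - 1"] stair_defect_down_eq[OF pos YX, of "i - 2"]
      by (simp add: g_def D_def algebra_simps)
  qed
  have "hilb_zext c h (D - 1 - i + int c - 1) = (\<Sum>r<c. int (h (D - 1 - i + int r)))"
    unfolding hilb_zext_def by (rule sum_reflect_window)
  then have "(\<Sum>r<c. g (i - int r)) = hilb_zext c h (D - 1 - i + int c - 1) - hilb_zext c h i"
    by (simp add: hilb_zext_def g_def h sum_subtractf algebra_simps)
  then show ?thesis
    using i by (intro exI[of _ i] exI[of _ "D - 1 - i"]) (auto simp: g_def h[symmetric])
qed

lemma stair_obstruction:
  fixes h :: "int \<Rightarrow> nat" and p\<^sub>1 p\<^sub>2 X Y :: int and c :: nat
  assumes "1 \<le> p\<^sub>1" "1 \<le> p\<^sub>2" "1 \<le> Y" "Y \<le> X" "3 \<le> c"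
    and "\<And>d. int (h d) = stair p\<^sub>1 p\<^sub>2 X Y d" and "\<not> almost_centered h"
  obtains i e where "0 \<le> i" "i < e"
    "h e < h i \<and> hilb_zext c h i \<le> hilb_zext c h (e + int c - 1) \<or>
     h i < h e \<and> hilb_zext c h (e + int c - 1) \<le> hilb_zext c h i"
proof (cases "X - Y \<le> p\<^sub>2")
  case True
  then show ?thesis using stair_obstruction_up[OF assms(1-4) True assms(5-7)] that by blast
next
  case False
  then show ?thesis using stair_obstruction_down[OF assms(1-4) _ assms(5-7)] that by force
qed

lemma hilbB_obstruction:
  fixes a b al be c :: nat
  assumes c: "3 \<le> c" and ab: "0 < al" "al < a" "0 < be" "be < b"
    and nac: "\<not> almost_centered (hilbB a b al be)"
  defines "h \<equiv> hilbB a b al be"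
  obtains i e where "0 \<le> i" "i < e"
    "h e < h i \<and> hilb_zext c h i \<le> hilb_zext c h (e + int c - 1) \<or>
     h i < h e \<and> hilb_zext c h (e + int c - 1) \<le> hilb_zext c h i"
proof (cases "b - be \<le> a - al")
  case True
  have hs: "int (h d) = stair (int al) (int be) (int a - int al) (int b - int be) d" for d
    using hilbB_eq_diag_counts[OF ab] by (simp add: h_def stair_def)
  show ?thesis
    by (rule stair_obstruction[OF _ _ _ _ c hs nac[folded h_def] that]) (use True ab in auto)
next
  case False
  have hs: "int (h d) = stair (int be) (int al) (int b - int be) (int a - int al) d" for d
    using hilbB_eq_diag_counts[OF ab(3,4,1,2)] by (simp add: h_def hilbB_swap stair_def)
  show ?thesis
    by (rule stair_obstruction[OF _ _ _ _ c hs nac[folded h_def] that]) (use False ab in auto)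
qed

section \<open>The algebra \<open>A\<close>\<close>

lemma monomial_cylinder_stdA:
  assumes "0 < al" "al < a" "be < b" "0 < c"
  shows "monomial_cylinder (stdA a b c al be) c"
proof
  show "finite (stdA a b c al be)"
    by (rule finite_subset[of _ "{..<a} \<times> {..<b} \<times> {..<c}"]) (auto simp: stdA_def)
qed (use assms in \<open>auto simp: stdA_def down_closed_def\<close>)

lemma card_mons0_stdA:
  assumes "0 < c"
  shows "card {m \<in> stdA a b c al be. mdeg m = d \<and> snd (snd m) = 0} = hilbB a b al be (int d)"
proof -
  have "{m \<in> stdA a b c al be. mdeg m = d \<and> snd (snd m) = 0} =
        (\<lambda>(i,j). (i,j,0)) ` {(i,j). i < a \<and> j < b \<and> \<not> (al \<le> i \<and> be \<le> j) \<and> int (i + j) = int d}"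
    using assms by (auto simp: stdA_def mdeg_def image_iff)
  then show ?thesis by (simp add: hilbB_def card_image inj_on_def)
qed

lemma card_mons_stdA:
  "int (card {m \<in> stdA a b c al be. mdeg m = d}) = hilb_zext c (hilbB a b al be) (int d)"
proof -
  define layer where "layer n = {(i,j). i < a \<and> j < b \<and> \<not> (al \<le> i \<and> be \<le> j) \<and> i + j = n}" for n
  have fin: "finite (layer n)" for n
    by (rule finite_subset[of _ "{..<a} \<times> {..<b}"]) (auto simp: layer_def)
  have layers: "{m \<in> stdA a b c al be. mdeg m = d} =
      (\<lambda>(r,i,j). (i,j,r)) ` (SIGMA r:{r \<in> {..<c}. r \<le> d}. layer (d - r))"
    by (auto simp: stdA_def layer_def mdeg_def image_iff)
  have "card {m \<in> stdA a b c al be. mdeg m = d} = card (SIGMA r:{r \<in> {..<c}. r \<le> d}. layer (d - r))"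
    unfolding layers by (rule card_image) (auto simp: inj_on_def)
  also have "\<dots> = (\<Sum>r\<in>{r \<in> {..<c}. r \<le> d}. card (layer (d - r)))"
    by (rule card_SigmaI) (auto simp: fin)
  also have "\<dots> = (\<Sum>r<c. if r \<le> d then card (layer (d - r)) else 0)"
    by (rule sum.inter_filter) simp
  also have "\<dots> = (\<Sum>r<c. hilbB a b al be (int d - int r))"
  proof (rule sum.cong[OF refl])
    fix r
    have "r \<le> d \<Longrightarrow> layer (d - r) =
        {(i,j). i < a \<and> j < b \<and> \<not> (al \<le> i \<and> be \<le> j) \<and> int (i + j) = int d - int r}"
      by (auto simp: layer_def)
    then show "(if r \<le> d then card (layer (d - r)) else 0) = hilbB a b al be (int d - int r)"
      by (simp add: hilbB_def)
  qed
  finally show ?thesis by (simp add: hilb_zext_def)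
qed

theorem lemma3p7:
  fixes a b c al be :: nat
  assumes "c \<ge> 3" and "0 < al" and "0 < be" and "al < a" and "be < b"
    and "\<not> almost_centered (hilbB a b al be)"
  shows "\<not> SLP TYPE('k::field_char_0) (stdA a b c al be)"
proof -
  define h where "h = hilbB a b al be"
  interpret monomial_cylinder "stdA a b c al be" c
    using assms by (intro monomial_cylinder_stdA) auto
  obtain i e where ie: "0 \<le> i" "i < e" and jump:
    "h e < h i \<and> hilb_zext c h i \<le> hilb_zext c h (e + int c - 1) \<or>
     h i < h e \<and> hilb_zext c h (e + int c - 1) \<le> hilb_zext c h i"
    using hilbB_obstruction[of c al a be b] assms unfolding h_def by blast
  define t where "t = nat (e + int c - 1 - i)"
  have ct: "c \<le> t" and idx: "nat i + (t + 1 - c) = nat e" "int (nat i + t) = e + int c - 1"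
    using ie c_pos by (auto simp: t_def)
  have B: "card (mons0 d) = h (int d)" for d
    using card_mons0_stdA c_pos by (simp add: mons0_def h_def)
  have A: "int (card (mons d)) = hilb_zext c h (int d)" for d
    using card_mons_stdA by (simp add: mons_def h_def)
  have "card (mons0 (nat i + (t + 1 - c))) = h e" "card (mons0 (nat i)) = h i"
    "int (card (mons (nat i + t))) = hilb_zext c h (e + int c - 1)"
    "int (card (mons (nat i))) = hilb_zext c h i"
    using ie idx by (simp_all add: A B)
  with jump show ?thesis
    by (intro not_SLP_if_obstruction[OF ct, of "nat i"]) (simp only: zle_int[symmetric])
qed

end
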